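(* For all positive integers $n$ and $k$, the number of entries equal to $k$ in row $a_1(n)$ of $T_1$ equals $\binom{n-1}{k-1}$.
   Context: For a positive integer $m$, the triangle $T_m$ is an array whose row $x$ ($x=1,2,\dots$) has $x$ entries, in columns $0,\dots,x-1$. Row $1$ is the single entry $1$. For $x>1$, row $x$ is obtained from row $x-1$ by rotating it cyclically left by $m$ positions (the entry in column $c$ of row $x-1$ moves to column $(c-m)\bmod(x-1)\in\{0,\dots,x-2\}$ of row $x$), then appending in column $x-1$ a new entry equal to $1$ plus the entry in column $0$ of row $x-1$. $T_m(x,c)$ denotes the entry in row $x$, column $c$, and $a_m(n)=\min\{x\in\mathbb{N}: T_m(x,x-1)=n\}$. Here $m=1$. The binomial coefficient $\binom{n-1}{k-1}$ is $0$ when $k-1>n-1$. *)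

theory Defs
  imports Main
begin

text \<open>Row x of the triangle T_m, as a list of length x (columns 0..x-1).
  Rows are indexed from 1; Trow m (Suc i) is row i+1. Trow m 0 is an unused dummy.\<close>
fun Trow :: "nat \<Rightarrow> nat \<Rightarrow> nat list" where
  "Trow m 0 = []"
| "Trow m (Suc 0) = [1]"
| "Trow m (Suc (Suc i)) = rotate m (Trow m (Suc i)) @ [1 + hd (Trow m (Suc i))]"

definition T :: "nat \<Rightarrow> nat \<Rightarrow> nat \<Rightarrow> nat" where
  "T m x c = Trow m x ! c"

definition a :: "nat \<Rightarrow> nat \<Rightarrow> nat" where
  "a m n = (LEAST x. x \<ge> 1 \<and> T m x (x - 1) = n)"

end

theory Submission
  imports Defs
begin

text \<open>For m = 1 the entries are binary weights plus one: row 2^j lists 1 + weight c for c < 2^j.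
  Passing from row 2^j to row 2^(j+1), step t removes the head entry 1 + weight t and appends
  1 + weight (2t) = 1 + weight t and 1 + weight (2t+1) = 2 + weight t. Hence the entries equal
  to k in row 2^(n-1) count the (n-1)-bit words with k-1 ones. Row x+1 ends with one more than
  the head of row x, which for x = 2^j + t, t < 2^j, is 1 + weight t; so row x+1 ends with
  1 + weight x, and as weight c \<ge> n-1 forces c \<ge> 2^(n-1) - 1, the value n first ends a row
  in row 2^(n-1).\<close>

fun bin_weight :: "nat \<Rightarrow> nat" where
  "bin_weight n = (if n = 0 then 0 else n mod 2 + bin_weight (n div 2))"

declare bin_weight.simps [simp del]

lemma bin_weight_0 [simp]: "bin_weight 0 = 0"
  by (simp add: bin_weight.simps)

lemma bin_weight_1 [simp]: "bin_weight (Suc 0) = 1"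
  by (simp add: bin_weight.simps)

lemma bin_weight_double [simp]: "bin_weight (2 * n) = bin_weight n"
  by (cases "n = 0") (simp_all add: bin_weight.simps [of "2 * n"])

lemma bin_weight_Suc_double [simp]: "bin_weight (Suc (2 * n)) = Suc (bin_weight n)"
  by (simp add: bin_weight.simps [of "Suc (2 * n)"])

lemma bin_weight_eq_0_iff: "bin_weight n = 0 \<longleftrightarrow> n = 0"
proof (induction n rule: less_induct)
  case (less n)
  show ?case
  proof (cases "even n")
    case True
    then obtain b where "n = 2 * b" ..
    then show ?thesis using less [of b] by (cases "b = 0") auto
  next
    case False
    then obtain b where "n = 2 * b + 1" ..
    then show ?thesis by simp
  qed
qed

lemma bin_weight_power_add: "t < 2 ^ j \<Longrightarrow> bin_weight (2 ^ j + t) = Suc (bin_weight t)"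
proof (induction j arbitrary: t)
  case 0
  then show ?case by simp
next
  case (Suc j)
  then have IH: "bin_weight (2 ^ j + t div 2) = Suc (bin_weight (t div 2))"
    by simp
  show ?case
  proof (cases "even t")
    case True
    then have "2 ^ Suc j + t = 2 * (2 ^ j + t div 2)" and "t = 2 * (t div 2)"
      by simp_all
    then show ?thesis
      using IH by (metis bin_weight_double)
  next
    case False
    then have "2 ^ Suc j + t = Suc (2 * (2 ^ j + t div 2))" and "t = Suc (2 * (t div 2))"
      by simp_all
    then show ?thesis
      using IH by (metis bin_weight_Suc_double)
  qed
qed

lemma bin_weight_power_minus_1: "bin_weight (2 ^ m - 1) = m"
proof (induction m)
  case (Suc m)
  have "(2::nat) ^ m \<ge> 1"
    by simp
  then have "(2::nat) ^ Suc m - 1 = Suc (2 * (2 ^ m - 1))"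
    by (simp only: power_Suc)
  with Suc show ?case by simp
qed simp

lemma power_bin_weight_le: "2 ^ bin_weight c \<le> Suc c"
proof (induction c rule: less_induct)
  case (less c)
  show ?case
  proof (cases "even c")
    case True
    then obtain d where c: "c = 2 * d" ..
    show ?thesis
    proof (cases "d = 0")
      case False
      with c have "d < c" by simp
      then have "(2::nat) ^ bin_weight d \<le> Suc d" by (rule less)
      then show ?thesis
        using c by simp
    qed (simp add: c)
  next
    case False
    then obtain d where c: "c = 2 * d + 1" ..
    then have "d < c" by simp
    then have "(2::nat) ^ bin_weight d \<le> Suc d" by (rule less)
    then show ?thesis
      using c by simp
  qed
qed

lemma card_bin_weight: "card {c. c < 2 ^ m \<and> bin_weight c = k} = m choose k"
proof (induction m arbitrary: k)
  case 0
  then show ?case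
    by (cases k) (auto simp: bin_weight_eq_0_iff)
next
  case (Suc m)
  let ?W = "\<lambda>k. {d. d < 2 ^ m \<and> bin_weight d = k}"
  show ?case
  proof (cases k)
    case 0
    then have "{c. c < 2 ^ Suc m \<and> bin_weight c = k} = {0}"
      by (auto simp: bin_weight_eq_0_iff)
    with 0 show ?thesis by simp
  next
    case k: (Suc k')
    have split: "{c. c < 2 ^ Suc m \<and> bin_weight c = k} = (\<lambda>d. 2 * d) ` ?W k \<union> (\<lambda>d. 2 * d + 1) ` ?W k'"
    proof (intro set_eqI iffI)
      fix c
      assume c: "c \<in> {c. c < 2 ^ Suc m \<and> bin_weight c = k}"
      show "c \<in> (\<lambda>d. 2 * d) ` ?W k \<union> (\<lambda>d. 2 * d + 1) ` ?W k'"
      proof (cases "even c")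
        case True
        then obtain d where "c = 2 * d" ..
        moreover from c this have "d \<in> ?W k" by simp
        ultimately show ?thesis by (intro UnI1 image_eqI)
      next
        case False
        then obtain d where "c = 2 * d + 1" ..
        moreover from c k this have "d \<in> ?W k'" by simp
        ultimately show ?thesis by (intro UnI2 image_eqI)
      qed
    qed (auto simp: k)
    have "(\<lambda>d. 2 * d) ` ?W k \<inter> (\<lambda>d. 2 * d + 1) ` ?W k' = {}"
      by auto presburger
    then have "card ((\<lambda>d. 2 * d) ` ?W k \<union> (\<lambda>d. 2 * d + 1) ` ?W k') = card (?W k) + card (?W k')"
      by (simp add: card_Un_disjoint card_image inj_on_def)
    with split Suc.IH k show ?thesis
      by simp
  qed
qed

lemma length_Trow: "length (Trow m x) = x"
  by (induction m x rule: Trow.induct) auto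

lemma Trow_1_doubling:
  assumes "N \<ge> 1" and row: "Trow 1 N = map (\<lambda>c. Suc (bin_weight c)) [0..<N]" and "t \<le> N"
  shows "Trow 1 (N + t) = map (\<lambda>c. Suc (bin_weight c)) ([t..<N] @ [0..<2 * t])"
  using \<open>t \<le> N\<close>
proof (induction t)
  case 0
  then show ?case using row by simp
next
  case (Suc t)
  then have IH: "Trow 1 (N + t) = map (\<lambda>c. Suc (bin_weight c)) (t # [Suc t..<N] @ [0..<2 * t])"
    by (simp add: upt_conv_Cons)
  obtain i where i: "N + t = Suc i"
    using \<open>N \<ge> 1\<close> by (cases "N + t") auto
  have "Trow 1 (N + Suc t) = rotate1 (Trow 1 (N + t)) @ [Suc (hd (Trow 1 (N + t)))]"
    by (simp add: i)
  also have "\<dots> = map (\<lambda>c. Suc (bin_weight c)) ([Suc t..<N] @ [0..<2 * t] @ [2 * t, Suc (2 * t)])"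
    unfolding IH by simp
  finally show ?case by simp
qed

lemma Trow_1_power: "Trow 1 (2 ^ j) = map (\<lambda>c. Suc (bin_weight c)) [0..<2 ^ j]"
proof (induction j)
  case (Suc j)
  have "Trow 1 (2 ^ j + 2 ^ j) = map (\<lambda>c. Suc (bin_weight c)) ([2 ^ j..<2 ^ j] @ [0..<2 * 2 ^ j])"
    by (rule Trow_1_doubling [OF _ Suc.IH]) simp_all
  then show ?case by (simp add: mult_2)
qed simp

lemma hd_Trow_1:
  assumes "t < 2 ^ j"
  shows "hd (Trow 1 (2 ^ j + t)) = Suc (bin_weight t)"
proof -
  have "Trow 1 (2 ^ j + t) = map (\<lambda>c. Suc (bin_weight c)) ([t..<2 ^ j] @ [0..<2 * t])"
    using assms by (intro Trow_1_doubling Trow_1_power) simp_all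
  then show ?thesis
    using assms by (simp add: upt_conv_Cons)
qed

lemma T_1_diagonal: "T 1 (Suc x) x = Suc (bin_weight x)"
proof (cases "x = 0")
  case False
  then obtain j where "2 ^ j \<le> x" and "x < 2 ^ (j + 1)"
    using ex_power_ivl1 [of 2 x] by auto
  then obtain t where x: "x = 2 ^ j + t" and "t < 2 ^ j"
    by (metis add.commute le_add_diff_inverse2 mult_2 nat_add_left_cancel_less power_add power_one_right)
  obtain i where "x = Suc i"
    using False not0_implies_Suc by blast
  then have "T 1 (Suc x) x = Suc (hd (Trow 1 x))"
    by (simp add: T_def nth_append length_rotate length_Trow)
  then show ?thesis
    using hd_Trow_1 [OF \<open>t < 2 ^ j\<close>] bin_weight_power_add [OF \<open>t < 2 ^ j\<close>] x by simp
qed (simp add: T_def)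

lemma a_1: "n \<ge> 1 \<Longrightarrow> a 1 n = 2 ^ (n - 1)"
  unfolding a_def
proof (rule Least_equality)
  assume "n \<ge> 1"
  show "1 \<le> (2::nat) ^ (n - 1) \<and> T 1 (2 ^ (n - 1)) (2 ^ (n - 1) - 1) = n"
    using T_1_diagonal [of "2 ^ (n - 1) - 1"] bin_weight_power_minus_1 [of "n - 1"] \<open>n \<ge> 1\<close>
    by simp
  fix y
  assume "1 \<le> y \<and> T 1 y (y - 1) = n"
  then have "bin_weight (y - 1) = n - 1"
    using T_1_diagonal [of "y - 1"] by simp
  then show "2 ^ (n - 1) \<le> y"
    using power_bin_weight_le [of "y - 1"] \<open>1 \<le> y \<and> T 1 y (y - 1) = n\<close> by simp
qed

theorem mainTheorem16:
  fixes n k :: nat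
  assumes "n \<ge> 1" and "k \<ge> 1"
  shows "card {c. c < a 1 n \<and> T 1 (a 1 n) c = k} = (n - 1) choose (k - 1)"
proof -
  have "{c. c < a 1 n \<and> T 1 (a 1 n) c = k} = {c. c < 2 ^ (n - 1) \<and> bin_weight c = k - 1}"
    unfolding a_1 [OF \<open>n \<ge> 1\<close>] T_def Trow_1_power using \<open>k \<ge> 1\<close> by auto
  then show ?thesis
    by (simp add: card_bin_weight)
qed

end
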